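(* Let $X$ be an absolutely continuous nonnegative random variable with finite moment of order $m+s-1$, where $m\geq 1$ and $s\geq 2$ are integers. Then the $s$-iterated distribution induced by $X$ has a finite moment of order $m$, given by $$\mu_{s,m}=\binom{m+s-1}{m}^{-1}\frac{\mathbb{E}X^{m+s-1}}{\mathbb{E}X^{s-1}}.$$
   Context: Let $X$ be a nonnegative absolutely continuous random variable with density $f_X$. Set $\overline{T}_{X,0}(x)=f_X(x)$ and $\mu_{X,0}=1$. For each integer $s\geq 1$ define recursively $\overline{T}_{X,s}(x)=\frac{1}{\mu_{X,s-1}}\int_x^\infty \overline{T}_{X,s-1}(t)\,dt$ for $x\geq 0$, and $\mu_{X,s}=\int_0^\infty \overline{T}_{X,s}(t)\,dt$ (assuming these integrals are finite). The function $\overline{T}_{X,s}$ is the tail (survival function) of a distribution on $[0,\infty)$, called the $s$-iterated distribution induced by $X$; for $s\geq 1$ its density is $\overline{T}_{X,s-1}/\mu_{X,s-1}$. $\mu_{s,m}$ denotes the moment of order $m$ of the $s$-iterated distribution induced by $X$. *)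

theory Defs
  imports "HOL-Analysis.Analysis"
begin

primrec iter_tail :: "(real \<Rightarrow> real) \<Rightarrow> nat \<Rightarrow> real \<Rightarrow> real" where
  "iter_tail f 0 = f"
| "iter_tail f (Suc s) = (\<lambda>x. (LINT t:{x..}|lborel. iter_tail f s t) /
      (if s = 0 then 1 else (LINT t:{0..}|lborel. iter_tail f s t)))"

definition iter_mean :: "(real \<Rightarrow> real) \<Rightarrow> nat \<Rightarrow> real" where
  "iter_mean f s = (if s = 0 then 1 else (LINT t:{0..}|lborel. iter_tail f s t))"

definition iter_density :: "(real \<Rightarrow> real) \<Rightarrow> nat \<Rightarrow> real \<Rightarrow> real" where
  "iter_density f s x = iter_tail f (s - 1) x / iter_mean f (s - 1)"

definition iter_moment :: "(real \<Rightarrow> real) \<Rightarrow> nat \<Rightarrow> nat \<Rightarrow> real" where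
  "iter_moment f s m = (LINT x:{0..}|lborel. x ^ m * iter_density f s x)"

definition moment :: "(real \<Rightarrow> real) \<Rightarrow> nat \<Rightarrow> real" where
  "moment f k = (LINT x:{0..}|lborel. x ^ k * f x)"

end

theory Submission
  imports Defs
begin

text \<open>Let P_j(x) be the integral of (y - x)^j f(y) over y \<ge> x, so that P_j(0) = E X^j.
  By Tonelli the integral of P_j over [x, \<infinity>) is P_(j+1)(x) / (j + 1), and induction on the
  recursive definition gives T_(X,j+1) = P_j / E X^j for j \<le> m + s - 2. Hence the density of the
  s-iterated distribution is (s - 1) P_(s-2) / E X^(s-1), and Tonelli once more, together with the
  Beta integral of x^m (y - x)^j over [0, y], which is y^(m+j+1) m! j! / (m + j + 1)!, evaluates its
  m-th moment.\<close>

lemma power_diff_has_integral: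
  fixes a y :: real
  assumes "a \<le> y"
  shows "((\<lambda>t. (y - t) ^ j) has_integral (y - a) ^ (j + 1) / (j + 1)) {a..y}"
proof -
  let ?F = "\<lambda>t. - 1 * (y - t) ^ (j + 1) / (j + 1)"
  have "((\<lambda>t. (y - t) ^ j) has_integral ?F y - ?F a) {a..y}"
    apply (rule fundamental_theorem_of_calculus[OF assms])
    apply (subst has_real_derivative_iff_has_vector_derivative[symmetric])
    apply (rule derivative_eq_intros refl | simp)+
    done
  then show ?thesis by simp
qed

lemma beta_power_has_integral:
  fixes y :: real
  assumes "0 \<le> y"
  shows "((\<lambda>x. x ^ m * (y - x) ^ j) has_integral
           y ^ (m + j + 1) * fact m * fact j / fact (m + j + 1)) {0..y}"
  using assms
proof (induction m arbitrary: j)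
  case 0
  then show ?case
    using power_diff_has_integral[OF 0, of j] by (simp add: divide_simps)
next
  case (Suc m)
  let ?c = "(m + 1) / (j + 1) :: real"
  \<comment> \<open>integration by parts; both boundary terms vanish\<close>
  have parts: "((\<lambda>x. x ^ (m + 1) * (y - x) ^ j - ?c * (x ^ m * (y - x) ^ (j + 1))) has_integral 0) {0..y}"
  proof -
    let ?G = "\<lambda>x::real. - 1 * x ^ (m + 1) * (y - x) ^ (j + 1) / (j + 1)"
    have "((\<lambda>x. x ^ (m + 1) * (y - x) ^ j - ?c * (x ^ m * (y - x) ^ (j + 1))) has_integral ?G y - ?G 0) {0..y}"
      apply (rule fundamental_theorem_of_calculus[OF Suc.prems])
      apply (subst has_real_derivative_iff_has_vector_derivative[symmetric])
      apply (rule derivative_eq_intros refl | simp)+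
      apply (simp add: field_simps)
      done
    then show ?thesis by simp
  qed
  have IH: "((\<lambda>x. ?c * (x ^ m * (y - x) ^ (j + 1))) has_integral
      ?c * (y ^ (m + (j + 1) + 1) * fact m * fact (j + 1) / fact (m + (j + 1) + 1))) {0..y}"
    by (rule has_integral_mult_right[OF Suc.IH[OF Suc.prems]])
  have coeff: "?c * (y ^ (m + (j + 1) + 1) * fact m * fact (j + 1) / fact (m + (j + 1) + 1))
      = y ^ (Suc m + j + 1) * fact (Suc m) * fact j / fact (Suc m + j + 1)"
  proof -
    have "fact (j + 1) = (j + 1) * (fact j :: real)" "fact (Suc m) = (m + 1) * (fact m :: real)"
      by (simp_all add: fact_Suc)
    then show ?thesis
      by (simp del: fact_Suc add: ac_simps)
  qed
  have "(\<lambda>x. x ^ (m + 1) * (y - x) ^ j - ?c * (x ^ m * (y - x) ^ (j + 1)) + ?c * (x ^ m * (y - x) ^ (j + 1)))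
      = (\<lambda>x. x ^ Suc m * (y - x) ^ j)"
    by simp
  with has_integral_add[OF parts IH] show ?case
    by (simp only: coeff add_0)
qed

lemma pred_atLeast_real[measurable (raw)]:
  fixes f g :: "'a \<Rightarrow> real"
  assumes [measurable]: "f \<in> borel_measurable M" "g \<in> borel_measurable M"
  shows "Measurable.pred M (\<lambda>x. f x \<in> {g x..})"
  unfolding atLeast_iff by measurable

lemma pred_atLeastAtMost_real[measurable (raw)]:
  fixes f g h :: "'a \<Rightarrow> real"
  assumes [measurable]: "f \<in> borel_measurable M" "g \<in> borel_measurable M" "h \<in> borel_measurable M"
  shows "Measurable.pred M (\<lambda>x. f x \<in> {g x..h x})"
  unfolding atLeastAtMost_iff by measurable

lemma set_integral_eq_nn_integral:
  assumes "h \<in> borel_measurable borel" "A \<in> sets borel" "\<And>t. t \<in> A \<Longrightarrow> 0 \<le> h t"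
  shows "(LINT t:A|lborel. h t) = enn2real (\<integral>\<^sup>+t. ennreal (indicator A t * h t) \<partial>lborel)"
  unfolding set_lebesgue_integral_def
  using assms by (subst integral_eq_nn_integral) (auto simp: indicator_def)

definition tail_moment :: "(real \<Rightarrow> real) \<Rightarrow> nat \<Rightarrow> real \<Rightarrow> ennreal" where
  "tail_moment g j x = (\<integral>\<^sup>+y. ennreal (indicator {x..} y * (y - x) ^ j * g y) \<partial>lborel)"

lemma borel_measurable_tail_moment[measurable]:
  assumes [measurable]: "g \<in> borel_measurable borel"
  shows "tail_moment g j \<in> borel_measurable borel"
  unfolding tail_moment_def by measurable

lemma nn_integral_weighted_tail_moment:
  assumes [measurable]: "g \<in> borel_measurable borel" "w \<in> borel_measurable borel"
    and g_nonneg: "\<And>y. 0 \<le> g y" and w_nonneg: "\<And>t. a \<le> t \<Longrightarrow> 0 \<le> w t"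
  shows "(\<integral>\<^sup>+t. ennreal (indicator {a..} t * w t) * tail_moment g j t \<partial>lborel)
    = (\<integral>\<^sup>+y. ennreal (indicator {a..} y * g y) *
         (\<integral>\<^sup>+t. ennreal (indicator {a..y} t * w t * (y - t) ^ j) \<partial>lborel) \<partial>lborel)"
proof -
  have "(\<integral>\<^sup>+t. ennreal (indicator {a..} t * w t) * tail_moment g j t \<partial>lborel)
     = (\<integral>\<^sup>+t. \<integral>\<^sup>+y. ennreal (indicator {a..} t * w t * indicator {t..} y * (y - t) ^ j * g y) \<partial>lborel \<partial>lborel)"
    unfolding tail_moment_def
    apply (rule nn_integral_cong)
    apply (subst nn_integral_cmult[symmetric])
     apply measurable
    apply (rule nn_integral_cong)
    using w_nonneg g_nonneg by (auto simp: indicator_def ennreal_mult[symmetric] mult_ac)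
  also have "\<dots> = (\<integral>\<^sup>+y. \<integral>\<^sup>+t. ennreal (indicator {a..} t * w t * indicator {t..} y * (y - t) ^ j * g y) \<partial>lborel \<partial>lborel)"
    by (rule lborel_pair.Fubini'[symmetric]) measurable
  also have "\<dots> = (\<integral>\<^sup>+y. \<integral>\<^sup>+t. ennreal (indicator {a..} y * g y) *
         ennreal (indicator {a..y} t * w t * (y - t) ^ j) \<partial>lborel \<partial>lborel)"
    apply (rule nn_integral_cong)+
    using w_nonneg g_nonneg by (auto simp: indicator_def ennreal_mult[symmetric] mult_ac)
  also have "\<dots> = (\<integral>\<^sup>+y. ennreal (indicator {a..} y * g y) *
         (\<integral>\<^sup>+t. ennreal (indicator {a..y} t * w t * (y - t) ^ j) \<partial>lborel) \<partial>lborel)"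
    by (intro nn_integral_cong nn_integral_cmult) measurable
  finally show ?thesis .
qed

lemma nn_integral_tail_moment:
  assumes [measurable]: "g \<in> borel_measurable borel" and g_nonneg: "\<And>y. 0 \<le> g y"
  shows "(\<integral>\<^sup>+t. ennreal (indicator {x..} t) * tail_moment g j t \<partial>lborel)
    = ennreal (1 / (j + 1)) * tail_moment g (j + 1) x"
proof -
  have "(\<integral>\<^sup>+t. ennreal (indicator {x..} t) * tail_moment g j t \<partial>lborel)
      = (\<integral>\<^sup>+y. ennreal (indicator {x..} y * g y) *
         (\<integral>\<^sup>+t. ennreal (indicator {x..y} t * 1 * (y - t) ^ j) \<partial>lborel) \<partial>lborel)"
    using nn_integral_weighted_tail_moment[of g "\<lambda>_. 1" x j] g_nonneg by simp
  also have "\<dots> = (\<integral>\<^sup>+y. ennreal (1 / (j + 1)) * ennreal (indicator {x..} y * (y - x) ^ (j + 1) * g y) \<partial>lborel)"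
  proof (rule nn_integral_cong)
    fix y :: real
    show "ennreal (indicator {x..} y * g y) *
         (\<integral>\<^sup>+t. ennreal (indicator {x..y} t * 1 * (y - t) ^ j) \<partial>lborel)
       = ennreal (1 / (j + 1)) * ennreal (indicator {x..} y * (y - x) ^ (j + 1) * g y)"
    proof (cases "x \<le> y")
      case True
      have "(\<integral>\<^sup>+t. ennreal (indicator {x..y} t * (y - t) ^ j) \<partial>lborel) = ennreal ((y - x) ^ (j + 1) / (j + 1))"
        by (rule nn_integral_has_integral_lebesgue[OF _ power_diff_has_integral[OF True]]) auto
      then show ?thesis
        using True g_nonneg[of y] by (simp add: ennreal_mult[symmetric] mult_ac)
    qed (simp add: indicator_def)
  qed
  also have "\<dots> = ennreal (1 / (j + 1)) * tail_moment g (j + 1) x"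
    unfolding tail_moment_def by (rule nn_integral_cmult) measurable
  finally show ?thesis
    by (simp add: add.commute)
qed

lemma nn_integral_power_mult_tail_moment:
  assumes [measurable]: "g \<in> borel_measurable borel" and g_nonneg: "\<And>y. 0 \<le> g y"
  shows "(\<integral>\<^sup>+t. ennreal (indicator {0..} t * t ^ m) * tail_moment g j t \<partial>lborel)
     = ennreal (fact m * fact j / fact (m + j + 1)) * tail_moment g (m + j + 1) 0"
proof -
  have "(\<integral>\<^sup>+t. ennreal (indicator {0..} t * t ^ m) * tail_moment g j t \<partial>lborel)
      = (\<integral>\<^sup>+y. ennreal (indicator {0..} y * g y) *
         (\<integral>\<^sup>+t. ennreal (indicator {0..y} t * t ^ m * (y - t) ^ j) \<partial>lborel) \<partial>lborel)"
    by (rule nn_integral_weighted_tail_moment) (auto simp: g_nonneg)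
  also have "\<dots> = (\<integral>\<^sup>+y. ennreal (fact m * fact j / fact (m + j + 1)) *
      ennreal (indicator {0..} y * (y - 0) ^ (m + j + 1) * g y) \<partial>lborel)"
  proof (rule nn_integral_cong)
    fix y :: real
    show "ennreal (indicator {0..} y * g y) *
         (\<integral>\<^sup>+t. ennreal (indicator {0..y} t * t ^ m * (y - t) ^ j) \<partial>lborel)
       = ennreal (fact m * fact j / fact (m + j + 1)) * ennreal (indicator {0..} y * (y - 0) ^ (m + j + 1) * g y)"
    proof (cases "0 \<le> y")
      case True
      have "(\<integral>\<^sup>+t. ennreal (indicator {0..y} t * (t ^ m * (y - t) ^ j)) \<partial>lborel)
          = ennreal (y ^ (m + j + 1) * fact m * fact j / fact (m + j + 1))"
        by (rule nn_integral_has_integral_lebesgue[OF _ beta_power_has_integral[OF True]]) auto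
      then show ?thesis
        using True g_nonneg[of y]
        by (simp add: ennreal_mult[symmetric] indicator_def field_simps del: fact_Suc)
    qed (simp add: indicator_def)
  qed
  also have "\<dots> = ennreal (fact m * fact j / fact (m + j + 1)) * tail_moment g (m + j + 1) 0"
    unfolding tail_moment_def by (rule nn_integral_cmult) measurable
  finally show ?thesis .
qed

lemma power_diff_le_one_plus_power:
  fixes x y :: real
  assumes "0 \<le> x" "x \<le> y" "j \<le> n"
  shows "(y - x) ^ j \<le> 1 + y ^ n"
proof -
  have "(y - x) ^ j \<le> y ^ j"
    using assms by (intro power_mono) auto
  also have "\<dots> \<le> 1 + y ^ n"
  proof (cases "y \<le> 1")
    case True
    then show ?thesis
      using assms power_le_one[of y j] by (simp add: add_increasing2)
  next
    case False
    then have "y ^ j \<le> y ^ n"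
      using assms by (intro power_increasing) auto
    then show ?thesis
      by simp
  qed
  finally show ?thesis .
qed

declare iter_tail.simps(2)[simp del]

locale nonneg_density =
  fixes f :: "real \<Rightarrow> real" and n :: nat
  assumes f_measurable[measurable]: "f \<in> borel_measurable borel"
    and f_nonneg: "\<And>x. 0 \<le> f x"
    and f_vanishes_neg: "\<And>x. x < 0 \<Longrightarrow> f x = 0"
    and f_integrable: "integrable lborel f"
    and f_integral: "(LINT x|lborel. f x) = 1"
    and moment_integrable: "set_integrable lborel {0..} (\<lambda>x. x ^ n * f x)"
begin

lemma nn_integral_f: "(\<integral>\<^sup>+y. ennreal (f y) \<partial>lborel) = 1"
  using nn_integral_eq_integral[OF f_integrable] f_nonneg f_integral by simp

lemma tail_moment_finite:
  assumes "j \<le> n" "0 \<le> x"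
  shows "tail_moment f j x < \<infinity>"
proof -
  have "tail_moment f j x \<le> (\<integral>\<^sup>+y. ennreal (f y) + ennreal (indicator {0..} y * y ^ n * f y) \<partial>lborel)"
    unfolding tail_moment_def
  proof (rule nn_integral_mono)
    fix y :: real
    show "ennreal (indicator {x..} y * (y - x) ^ j * f y) \<le> ennreal (f y) + ennreal (indicator {0..} y * y ^ n * f y)"
    proof (cases "x \<le> y")
      case True
      have "(y - x) ^ j * f y \<le> (1 + y ^ n) * f y"
        using power_diff_le_one_plus_power[OF assms(2) True assms(1)] f_nonneg[of y]
        by (intro mult_right_mono) auto
      then show ?thesis
        using True assms f_nonneg[of y]
        by (simp add: indicator_def ennreal_plus[symmetric] del: ennreal_plus) (simp add: algebra_simps)
    qed (simp add: indicator_def)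
  qed
  also have "\<dots> = (\<integral>\<^sup>+y. ennreal (f y) \<partial>lborel) + (\<integral>\<^sup>+y. ennreal (indicator {0..} y * y ^ n * f y) \<partial>lborel)"
    by (rule nn_integral_add) auto
  also have "\<dots> < \<infinity>"
  proof -
    have "integrable lborel (\<lambda>y. indicator {0..} y * y ^ n * f y)"
      using moment_integrable by (simp add: set_integrable_def mult.assoc)
    then have "(\<integral>\<^sup>+y. ennreal (indicator {0..} y * y ^ n * f y) \<partial>lborel)
        = ennreal (LINT y|lborel. indicator {0..} y * y ^ n * f y)"
      by (rule nn_integral_eq_integral) (auto simp: indicator_def f_nonneg)
    then show ?thesis
      by (simp add: nn_integral_f)
  qed
  finally show ?thesis .
qed

lemma tail_moment_at_0_nonzero: "tail_moment f j 0 \<noteq> 0"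
proof
  assume "tail_moment f j 0 = 0"
  then have "AE y in lborel. ennreal (indicator {0..} y * (y - 0) ^ j * f y) = 0"
    unfolding tail_moment_def by (subst (asm) nn_integral_0_iff_AE) auto
  then have "AE y in lborel. f y = 0"
    using AE_lborel_singleton[of 0]
  proof eventually_elim
    case (elim y)
    show ?case
    proof (cases "y < 0")
      case False
      with elim have "0 < y" "y ^ j * f y \<le> 0"
        by (auto simp: indicator_def ennreal_eq_0_iff)
      moreover have "0 < y ^ j"
        using \<open>0 < y\<close> by simp
      ultimately show ?thesis
        using f_nonneg[of y] by (simp add: mult_le_0_iff)
    qed (rule f_vanishes_neg)
  qed
  then have "(LINT x|lborel. f x) = 0"
    by (rule integral_eq_zero_AE)
  with f_integral show False
    by simp
qed

lemma moment_eq_tail_moment: "moment f k = enn2real (tail_moment f k 0)"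
  unfolding moment_def tail_moment_def
  by (subst set_integral_eq_nn_integral) (auto simp: f_nonneg mult_ac)

lemma moment_pos: "j \<le> n \<Longrightarrow> 0 < moment f j"
  using tail_moment_finite[of j 0] tail_moment_at_0_nonzero[of j]
  by (simp add: moment_eq_tail_moment enn2real_positive_iff zero_less_iff_neq_zero)

lemma moment_0: "moment f 0 = 1"
proof -
  have "tail_moment f 0 0 = (\<integral>\<^sup>+y. ennreal (f y) \<partial>lborel)"
    unfolding tail_moment_def by (rule nn_integral_cong) (auto simp: indicator_def f_vanishes_neg)
  then show ?thesis
    by (simp add: moment_eq_tail_moment nn_integral_f)
qed

lemma set_integral_tail_moment:
  assumes "j < n" "0 \<le> x"
  shows "(LINT t:{x..}|lborel. enn2real (tail_moment f j t)) = enn2real (tail_moment f (Suc j) x) / Suc j"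
proof -
  have "(\<integral>\<^sup>+t. ennreal (indicator {x..} t * enn2real (tail_moment f j t)) \<partial>lborel)
      = (\<integral>\<^sup>+t. ennreal (indicator {x..} t) * tail_moment f j t \<partial>lborel)"
    using assms tail_moment_finite[of j]
    by (intro nn_integral_cong) (auto simp: indicator_def)
  also have "\<dots> = ennreal (1 / Suc j) * tail_moment f (Suc j) x"
    by (simp add: nn_integral_tail_moment f_nonneg add.commute)
  finally show ?thesis
    by (subst set_integral_eq_nn_integral) (auto simp: enn2real_mult)
qed

lemma iter_tail_Suc_eq: "iter_tail f (Suc s) x = (LINT t:{x..}|lborel. iter_tail f s t) / iter_mean f s"
  by (simp add: iter_mean_def iter_tail.simps(2))

lemma iter_tail_Suc:
  "j < n \<Longrightarrow> 0 \<le> x \<Longrightarrow> iter_tail f (Suc j) x = enn2real (tail_moment f j x) / moment f j"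
proof (induction j arbitrary: x)
  case 0
  then show ?case
    by (simp add: iter_tail_Suc_eq iter_mean_def moment_0 tail_moment_def set_integral_eq_nn_integral f_nonneg)
next
  case (Suc j)
  have integral: "(LINT t:{y..}|lborel. iter_tail f (Suc j) t)
      = enn2real (tail_moment f (Suc j) y) / (Suc j * moment f j)" if "0 \<le> y" for y
  proof -
    have "(LINT t:{y..}|lborel. iter_tail f (Suc j) t) = (LINT t:{y..}|lborel. enn2real (tail_moment f j t) / moment f j)"
      using Suc that by (intro set_lebesgue_integral_cong) auto
    then show ?thesis
      using Suc.prems that by (simp add: set_integral_tail_moment)
  qed
  have mean: "iter_mean f (Suc j) = moment f (Suc j) / (Suc j * moment f j)"
    using integral[of 0] by (simp add: iter_mean_def moment_eq_tail_moment)
  have "iter_tail f (Suc (Suc j)) x = (LINT t:{x..}|lborel. iter_tail f (Suc j) t) / iter_mean f (Suc j)"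
    by (rule iter_tail_Suc_eq)
  also have "\<dots> = enn2real (tail_moment f (Suc j) x) / moment f (Suc j)"
    unfolding integral[OF Suc.prems(2)] mean
    using Suc.prems moment_pos[of j] moment_pos[of "Suc j"] by (simp del: of_nat_Suc)
  finally show ?case .
qed

lemma iter_mean_Suc: "j < n \<Longrightarrow> iter_mean f (Suc j) = moment f (Suc j) / (Suc j * moment f j)"
proof -
  assume "j < n"
  have "iter_mean f (Suc j) = (LINT t:{0..}|lborel. iter_tail f (Suc j) t)"
    by (simp add: iter_mean_def)
  also have "\<dots> = (LINT t:{0..}|lborel. enn2real (tail_moment f j t) / moment f j)"
    using \<open>j < n\<close> by (intro set_lebesgue_integral_cong) (auto simp: iter_tail_Suc)
  also have "\<dots> = moment f (Suc j) / (Suc j * moment f j)"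
    using \<open>j < n\<close> by (simp add: set_integral_tail_moment moment_eq_tail_moment)
  finally show ?thesis .
qed

lemma iter_density_Suc_Suc:
  assumes "j < n" "0 \<le> x"
  shows "iter_density f (Suc (Suc j)) x = Suc j / moment f (Suc j) * enn2real (tail_moment f j x)"
  using assms moment_pos[of j] moment_pos[of "Suc j"]
  by (simp add: iter_density_def iter_tail_Suc iter_mean_Suc field_simps del: of_nat_Suc)

lemma nn_integral_power_mult_enn2real_tail_moment:
  assumes "m + j + 1 = n"
  shows "(\<integral>\<^sup>+x. ennreal (indicator {0..} x * x ^ m * enn2real (tail_moment f j x)) \<partial>lborel)
    = ennreal (fact m * fact j / fact n * moment f n)"
proof -
  have "(\<integral>\<^sup>+x. ennreal (indicator {0..} x * x ^ m * enn2real (tail_moment f j x)) \<partial>lborel)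
      = (\<integral>\<^sup>+x. ennreal (indicator {0..} x * x ^ m) * tail_moment f j x \<partial>lborel)"
    using assms tail_moment_finite[of j]
    by (intro nn_integral_cong) (auto simp: indicator_def ennreal_mult)
  also have "\<dots> = ennreal (fact m * fact j / fact n) * tail_moment f n 0"
    using assms by (simp add: nn_integral_power_mult_tail_moment f_nonneg)
  also have "\<dots> = ennreal (fact m * fact j / fact n * moment f n)"
    using tail_moment_finite[of n 0]
    by (subst ennreal_mult) (auto simp: moment_eq_tail_moment)
  finally show ?thesis .
qed

lemma iter_moment_Suc_Suc:
  assumes "m + j + 1 = n"
  shows "set_integrable lborel {0..} (\<lambda>x. x ^ m * iter_density f (Suc (Suc j)) x)
    \<and> iter_moment f (Suc (Suc j)) m = fact m * fact (Suc j) / fact n * (moment f n / moment f (Suc j))"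
proof -
  define c where "c = Suc j / moment f (Suc j)"
  define g where "g x = c * (indicator {0..} x * x ^ m * enn2real (tail_moment f j x))" for x
  have [measurable]: "g \<in> borel_measurable borel"
    unfolding g_def by measurable
  have c_pos: "0 < c"
    using assms moment_pos[of "Suc j"] by (simp add: c_def)
  have density: "(\<lambda>x. indicator {0..} x *\<^sub>R (x ^ m * iter_density f (Suc (Suc j)) x)) = g"
    using assms by (auto simp: g_def c_def indicator_def iter_density_Suc_Suc)
  have "(\<integral>\<^sup>+x. ennreal (g x) \<partial>lborel)
      = ennreal c * (\<integral>\<^sup>+x. ennreal (indicator {0..} x * x ^ m * enn2real (tail_moment f j x)) \<partial>lborel)"
    unfolding g_def using c_pos
    by (subst nn_integral_cmult[symmetric]) (auto simp: ennreal_mult indicator_def)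
  also have "\<dots> = ennreal c * ennreal (fact m * fact j / fact n * moment f n)"
    using assms by (simp add: nn_integral_power_mult_enn2real_tail_moment)
  also have "\<dots> = ennreal (c * (fact m * fact j / fact n * moment f n))"
    using c_pos moment_pos[of n] by (subst ennreal_mult) auto
  also have "c * (fact m * fact j / fact n * moment f n) = fact m * fact (Suc j) / fact n * (moment f n / moment f (Suc j))"
    by (simp add: c_def ac_simps)
  finally have "integrable lborel g \<and> integral\<^sup>L lborel g = fact m * fact (Suc j) / fact n * (moment f n / moment f (Suc j))"
    using c_pos assms moment_pos[of n] moment_pos[of "Suc j"]
    by (subst (asm) nn_integral_eq_integrable) (auto simp: g_def indicator_def)
  then show ?thesis
    unfolding set_integrable_def iter_moment_def set_lebesgue_integral_def density .
qed

end

theorem proposition1: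
  fixes f :: "real \<Rightarrow> real" and m s :: nat
  assumes f_meas: "f \<in> borel_measurable borel"
    and f_nonneg: "\<And>x. 0 \<le> f x"
    and f_supp: "\<And>x. x < 0 \<Longrightarrow> f x = 0"
    and f_int: "integrable lborel f"
    and f_norm: "(LINT x|lborel. f x) = 1"
    and hm: "m \<ge> 1" and hs: "s \<ge> 2"
    and fin_mom: "set_integrable lborel {0..} (\<lambda>x. x ^ (m + s - 1) * f x)"
  shows "set_integrable lborel {0..} (\<lambda>x. x ^ m * iter_density f s x)
    \<and> iter_moment f s m
        = inverse (real ((m + s - 1) choose m)) * (moment f (m + s - 1) / moment f (s - 1))"
proof -
  \<comment> \<open>the argument also covers m = 0\<close>
  interpret nonneg_density f "m + s - 1"
    using f_meas f_nonneg f_supp f_int f_norm fin_mom by unfold_locales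
  obtain j where "s = Suc (Suc j)"
    using hs by (metis add_2_eq_Suc le_Suc_ex)
  then have n: "m + j + 1 = m + s - 1" and s: "Suc j = s - 1" "Suc (s - 1) = s"
    by simp_all
  have coeff: "fact m * fact (s - 1) / fact (m + s - 1) = inverse (real ((m + s - 1) choose m))"
    using binomial_fact[of m "m + s - 1", where 'a = real] hs by simp
  from iter_moment_Suc_Suc[OF n, unfolded s coeff] show ?thesis .
qed

end
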